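(* Let $G_{\lambda,k}$ be a skeleton of a connected graph $G$ with natural map $f$, and let $M=\min\{\lambda,k\}$. If two distinct vertices $x,y$ of $G_{\lambda,k}$ are not joined by an edge, then their preimages $f^{-1}(x)$ and $f^{-1}(y)$ in $G$ are $M$-disjoint.
   Context: $d$ is the graph metric on vertices. Sets $X,Y$ are $M$-disjoint if $d(a,b)>M$ for all $a\in X,b\in Y$. A set $X$ is $k$-connected if any two of its points are joined by a finite sequence in $X$ with consecutive distances $\le k$. Skeleton $G_{\lambda,k}$ (root $x_0\in V(G)$, scale $\lambda\ge1$, connectivity $k\ge1$): layers $A_{N,\lambda}=\{x: N\lambda<d(x,x_0)\le(N+1)\lambda\}$, $N\in\mathbb Z$; blocks are the maximal $k$-connected subsets of layers; $G_{\lambda,k}$ has a vertex per block and an edge between two blocks iff an edge of $G$ joins a vertex of one to a vertex of the other. The natural map $f$ sends each vertex of $G$ to its block. *)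

theory Defs
  imports Complex_Main
begin

definition graph :: "'a set \<Rightarrow> ('a \<Rightarrow> 'a \<Rightarrow> bool) \<Rightarrow> bool" where
  "graph V E \<longleftrightarrow> (\<forall>u v. E u v \<longrightarrow> u \<in> V \<and> v \<in> V \<and> u \<noteq> v \<and> E v u)"

definition walk :: "'a set \<Rightarrow> ('a \<Rightarrow> 'a \<Rightarrow> bool) \<Rightarrow> 'a \<Rightarrow> 'a \<Rightarrow> nat \<Rightarrow> bool" where
  "walk V E u v n \<longleftrightarrow> (\<exists>p. length p = Suc n \<and> hd p = u \<and> last p = v \<and> set p \<subseteq> V
      \<and> (\<forall>i<n. E (p ! i) (p ! Suc i)))"

definition connected_graph :: "'a set \<Rightarrow> ('a \<Rightarrow> 'a \<Rightarrow> bool) \<Rightarrow> bool" where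
  "connected_graph V E \<longleftrightarrow> V \<noteq> {} \<and> (\<forall>u\<in>V. \<forall>v\<in>V. \<exists>n. walk V E u v n)"

definition gdist :: "'a set \<Rightarrow> ('a \<Rightarrow> 'a \<Rightarrow> bool) \<Rightarrow> 'a \<Rightarrow> 'a \<Rightarrow> nat" where
  "gdist V E u v = (LEAST n. walk V E u v n)"

definition M_disjoint :: "'a set \<Rightarrow> ('a \<Rightarrow> 'a \<Rightarrow> bool) \<Rightarrow> real \<Rightarrow> 'a set \<Rightarrow> 'a set \<Rightarrow> bool" where
  "M_disjoint V E M X Y \<longleftrightarrow> (\<forall>a\<in>X. \<forall>b\<in>Y. real (gdist V E a b) > M)"

definition k_connected :: "'a set \<Rightarrow> ('a \<Rightarrow> 'a \<Rightarrow> bool) \<Rightarrow> real \<Rightarrow> 'a set \<Rightarrow> bool" where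
  "k_connected V E k X \<longleftrightarrow> (\<forall>a\<in>X. \<forall>b\<in>X. \<exists>p. p \<noteq> [] \<and> hd p = a \<and> last p = b \<and> set p \<subseteq> X
      \<and> (\<forall>i < length p - 1. real (gdist V E (p ! i) (p ! Suc i)) \<le> k))"

definition layer :: "'a set \<Rightarrow> ('a \<Rightarrow> 'a \<Rightarrow> bool) \<Rightarrow> 'a \<Rightarrow> real \<Rightarrow> int \<Rightarrow> 'a set" where
  "layer V E x0 lam N = {x\<in>V. real_of_int N * lam < real (gdist V E x x0)
                               \<and> real (gdist V E x x0) \<le> (real_of_int N + 1) * lam}"

definition is_block :: "'a set \<Rightarrow> ('a \<Rightarrow> 'a \<Rightarrow> bool) \<Rightarrow> 'a \<Rightarrow> real \<Rightarrow> real \<Rightarrow> 'a set \<Rightarrow> bool" where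
  "is_block V E x0 lam k B \<longleftrightarrow> (\<exists>N. B \<subseteq> layer V E x0 lam N \<and> B \<noteq> {} \<and> k_connected V E k B
      \<and> (\<forall>C. B \<subseteq> C \<and> C \<subseteq> layer V E x0 lam N \<and> k_connected V E k C \<longrightarrow> C = B))"

definition skel_vertices :: "'a set \<Rightarrow> ('a \<Rightarrow> 'a \<Rightarrow> bool) \<Rightarrow> 'a \<Rightarrow> real \<Rightarrow> real \<Rightarrow> 'a set set" where
  "skel_vertices V E x0 lam k = {B. is_block V E x0 lam k B}"

definition skel_edge :: "('a \<Rightarrow> 'a \<Rightarrow> bool) \<Rightarrow> 'a set \<Rightarrow> 'a set \<Rightarrow> bool" where
  "skel_edge E B C \<longleftrightarrow> (\<exists>u\<in>B. \<exists>v\<in>C. E u v)"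

definition skel_map :: "'a set \<Rightarrow> ('a \<Rightarrow> 'a \<Rightarrow> bool) \<Rightarrow> 'a \<Rightarrow> real \<Rightarrow> real \<Rightarrow> 'a \<Rightarrow> 'a set" where
  "skel_map V E x0 lam k v = (THE B. is_block V E x0 lam k B \<and> v \<in> B)"

end

theory Submission
  imports Defs
begin

text \<open>Every block is the k-component, inside its layer, of any of its points; hence blocks
partition V and the preimage of a block under the natural map is the block itself.
Now let a \<in> X and b \<in> Y with d(a,b) \<le> min{\<lambda>,k} and follow a shortest path from a to b.
Its vertices are within min{\<lambda>,k} of both a and b. Since d(-,x0) is 1-Lipschitz, their layer
indices differ by at most one from those of a and b, which are distinct (otherwise b would be
absorbed into X). So each vertex of the path lies in the layer of a or of b, and is absorbed into
X or into Y. The path therefore crosses from X to Y along an edge of G.\<close>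

lemma list_path_iff_relpowp:
  "(\<exists>p. length p = Suc n \<and> hd p = u \<and> last p = v \<and> set p \<subseteq> S \<and> (\<forall>i<n. R (p ! i) (p ! Suc i)))
   \<longleftrightarrow> u \<in> S \<and> ((\<lambda>x y. x \<in> S \<and> y \<in> S \<and> R x y) ^^ n) u v"
  (is "?path \<longleftrightarrow> ?rel")
proof
  assume ?path
  then obtain p where p: "length p = Suc n" "hd p = u" "last p = v" "set p \<subseteq> S"
    "\<forall>i<n. R (p ! i) (p ! Suc i)"
    by blast
  have "p \<noteq> []" using p(1) by auto
  then have "p ! 0 = u" "p ! n = v" using p(1-3) by (auto simp: hd_conv_nth last_conv_nth)
  moreover have "p ! i \<in> S" if "i \<le> n" for i using p(1,4) that by (auto intro: nth_mem)
  ultimately show ?rel unfolding relpowp_fun_conv using p(5) by (auto intro!: exI[of _ "(!) p"])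
next
  assume ?rel
  then obtain f where f: "f 0 = u" "f n = v" "\<forall>i<n. f i \<in> S \<and> f (Suc i) \<in> S \<and> R (f i) (f (Suc i))"
    and "u \<in> S"
    unfolding relpowp_fun_conv by blast
  then have in_S: "f i \<in> S" if "i \<le> n" for i using that by (cases i) auto
  define p where "p = map f [0..<Suc n]"
  have nth: "p ! i = f i" if "i \<le> n" for i
    using that unfolding p_def by (simp del: upt_Suc)
  have length: "length p = Suc n" unfolding p_def by simp
  then have "p \<noteq> []" by auto
  then have "hd p = u" "last p = v" using length nth f(1,2) by (simp_all add: hd_conv_nth last_conv_nth)
  moreover have "set p \<subseteq> S" unfolding p_def using in_S by auto
  moreover have "\<forall>i<n. R (p ! i) (p ! Suc i)" using f(3) nth by simp
  ultimately show ?path using length by blast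
qed

lemma walk_iff_relpowp:
  assumes "graph V E"
  shows "walk V E u v n \<longleftrightarrow> u \<in> V \<and> (E ^^ n) u v"
proof -
  have "(\<lambda>x y. x \<in> V \<and> y \<in> V \<and> E x y) = E" using assms unfolding graph_def by blast
  then show ?thesis unfolding walk_def list_path_iff_relpowp by simp
qed

lemma relpowp_symmetric: "symp P \<Longrightarrow> (P ^^ n) x y \<Longrightarrow> (P ^^ n) y x"
proof (induction n arbitrary: y)
  case (Suc n)
  from Suc.prems(2) obtain z where "(P ^^ n) x z" "P z y" by (rule relpowp_Suc_E)
  with Suc have "P y z" "(P ^^ n) z x" by (blast dest: sympD)+
  then show ?case by (rule relpowp_Suc_I2)
qed simp

lemma ex_boundary_step: "P (f 0) \<Longrightarrow> \<not> P (f n) \<Longrightarrow> \<exists>i<n. P (f i) \<and> \<not> P (f (Suc i))"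
proof (induction n)
  case (Suc n)
  then show ?case by (cases "P (f n)") (auto intro: less_SucI)
qed simp

definition k_step :: "'a set \<Rightarrow> ('a \<Rightarrow> 'a \<Rightarrow> bool) \<Rightarrow> real \<Rightarrow> 'a set \<Rightarrow> 'a \<Rightarrow> 'a \<Rightarrow> bool" where
  "k_step V E k S x y \<longleftrightarrow> x \<in> S \<and> y \<in> S \<and> real (gdist V E x y) \<le> k"

definition k_component :: "'a set \<Rightarrow> ('a \<Rightarrow> 'a \<Rightarrow> bool) \<Rightarrow> real \<Rightarrow> 'a set \<Rightarrow> 'a \<Rightarrow> 'a set" where
  "k_component V E k S x = {y. (k_step V E k S)\<^sup>*\<^sup>* x y}"

lemma k_connected_iff_rtranclp:
  "k_connected V E k X \<longleftrightarrow> (\<forall>a\<in>X. \<forall>b\<in>X. (k_step V E k X)\<^sup>*\<^sup>* a b)"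
proof -
  have nonempty: "p \<noteq> [] \<longleftrightarrow> (\<exists>n. length p = Suc n)" for p :: "'a list"
    by (cases p) auto
  have chain_length: "(\<exists>p. p \<noteq> [] \<and> hd p = a \<and> last p = b \<and> set p \<subseteq> X
           \<and> (\<forall>i < length p - 1. real (gdist V E (p ! i) (p ! Suc i)) \<le> k))
        \<longleftrightarrow> (\<exists>n p. length p = Suc n \<and> hd p = a \<and> last p = b \<and> set p \<subseteq> X
           \<and> (\<forall>i<n. real (gdist V E (p ! i) (p ! Suc i)) \<le> k))" for a b
    unfolding nonempty by (auto; blast)
  show ?thesis
    unfolding k_connected_def chain_length rtranclp_power k_step_def[abs_def]
      list_path_iff_relpowp[where R = "\<lambda>x y. real (gdist V E x y) \<le> k"] by blast
qed

lemma k_connected_subset_k_component: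
  assumes "k_connected V E k C" "C \<subseteq> S" "x \<in> C"
  shows "C \<subseteq> k_component V E k S x"
proof
  fix y assume "y \<in> C"
  then have "(k_step V E k C)\<^sup>*\<^sup>* x y" using assms(1,3) unfolding k_connected_iff_rtranclp by blast
  moreover have "k_step V E k C \<le> k_step V E k S" using assms(2) unfolding k_step_def by auto
  ultimately show "y \<in> k_component V E k S x" unfolding k_component_def by (auto dest: rtranclp_mono)
qed

lemma k_component_subset: "x \<in> S \<Longrightarrow> k_component V E k S x \<subseteq> S"
  unfolding k_component_def by (auto elim: rtranclp.cases simp: k_step_def)

locale connected_simple_graph =
  fixes V :: "'a set" and E :: "'a \<Rightarrow> 'a \<Rightarrow> bool"
  assumes graph: "graph V E" and connected: "connected_graph V E"
begin

lemma relpowp_gdist: "u \<in> V \<Longrightarrow> v \<in> V \<Longrightarrow> (E ^^ gdist V E u v) u v"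
  using connected LeastI_ex[of "walk V E u v"]
  unfolding connected_graph_def gdist_def walk_iff_relpowp[OF graph] by blast

lemma gdist_le: "u \<in> V \<Longrightarrow> (E ^^ n) u v \<Longrightarrow> gdist V E u v \<le> n"
  unfolding gdist_def by (rule Least_le) (simp add: walk_iff_relpowp[OF graph])

lemma gdist_commute:
  assumes "u \<in> V" "v \<in> V"
  shows "gdist V E u v = gdist V E v u"
proof -
  have "symp E" using graph unfolding graph_def by (blast intro: sympI)
  then show ?thesis using assms by (metis antisym gdist_le relpowp_gdist relpowp_symmetric)
qed

lemma gdist_triangle:
  "u \<in> V \<Longrightarrow> v \<in> V \<Longrightarrow> w \<in> V \<Longrightarrow> gdist V E u w \<le> gdist V E u v + gdist V E v w"
  by (meson gdist_le relpowp_gdist relpowp_trans)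

lemma abs_gdist_diff_le:
  "u \<in> V \<Longrightarrow> v \<in> V \<Longrightarrow> w \<in> V \<Longrightarrow> \<bar>real (gdist V E u w) - real (gdist V E v w)\<bar> \<le> real (gdist V E u v)"
  using gdist_triangle[of u v w] gdist_triangle[of v u w] gdist_commute[of u v] by linarith

lemma path_in_V:
  assumes "\<forall>i<n. E (f i) (f (Suc i))" "f 0 \<in> V" "i \<le> n"
  shows "f i \<in> V"
proof (cases i)
  case (Suc i')
  then show ?thesis using graph assms(1,3) unfolding graph_def by (metis Suc_le_lessD)
qed (use assms(2) in simp)

lemma gdist_along_path:
  assumes path: "\<forall>i<n. E (f i) (f (Suc i))" and "f 0 \<in> V" "i \<le> j" "j \<le> n"
  shows "gdist V E (f i) (f j) \<le> j - i"
proof (rule gdist_le)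
  show "f i \<in> V" using path_in_V assms by simp
  show "(E ^^ (j - i)) (f i) (f j)"
    unfolding relpowp_fun_conv using assms(3,4) path
    by (intro exI[of _ "\<lambda>t. f (i + t)"]) auto
qed

lemma symp_k_step: "S \<subseteq> V \<Longrightarrow> symp (k_step V E k S)"
  unfolding k_step_def by (auto intro!: sympI simp: gdist_commute subset_iff)

lemma k_connected_k_component:
  assumes "S \<subseteq> V"
  shows "k_connected V E k (k_component V E k S x)" (is "k_connected V E k ?C")
proof -
  have reach: "(k_step V E k ?C)\<^sup>*\<^sup>* a b" if "a \<in> ?C" "(k_step V E k S)\<^sup>*\<^sup>* a b" for a b
    using that(2,1)
  proof (induction rule: rtranclp_induct)
    case (step y z)
    then have "y \<in> ?C" "z \<in> ?C"
      unfolding k_component_def by (auto intro: rtranclp_trans)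
    with step show ?case unfolding k_step_def by (auto intro: rtranclp.rtrancl_into_rtrancl)
  qed simp
  have "(k_step V E k S)\<^sup>*\<^sup>* a b" if "a \<in> ?C" "b \<in> ?C" for a b
  proof -
    have "(k_step V E k S)\<^sup>*\<^sup>* a x"
      using that(1) symp_rtranclp[OF symp_k_step[OF assms(1)]] unfolding k_component_def
      by (blast dest: sympD)
    with that(2) show ?thesis unfolding k_component_def by auto
  qed
  with reach show ?thesis unfolding k_connected_iff_rtranclp by blast
qed

end

locale skeleton = connected_simple_graph +
  fixes x0 :: 'a and lam k :: real
  assumes root: "x0 \<in> V" and scale_pos: "lam > 0"
begin

definition layer_of :: "'a \<Rightarrow> int" where
  "layer_of v = \<lceil>real (gdist V E v x0) / lam\<rceil> - 1"

definition block_of :: "'a \<Rightarrow> 'a set" where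
  "block_of v = k_component V E k (layer V E x0 lam (layer_of v)) v"

lemma mem_layer_iff: "v \<in> layer V E x0 lam N \<longleftrightarrow> v \<in> V \<and> layer_of v = N"
  using scale_pos unfolding layer_def layer_of_def
  by (auto simp: ceiling_eq_iff pos_less_divide_eq pos_divide_le_eq algebra_simps)

lemma layer_subset: "layer V E x0 lam N \<subseteq> V"
  unfolding layer_def by auto

lemma layer_of_close:
  assumes "u \<in> V" "v \<in> V" "real (gdist V E u v) \<le> lam"
  shows "\<bar>layer_of u - layer_of v\<bar> \<le> 1"
proof -
  let ?r = "\<lambda>w. real (gdist V E w x0) / lam"
  have "\<bar>real (gdist V E u x0) - real (gdist V E v x0)\<bar> \<le> lam"
    using abs_gdist_diff_le[OF assms(1,2) root] assms(3) by linarith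
  then have "?r u \<le> ?r v + 1" "?r v \<le> ?r u + 1"
    using scale_pos by (auto simp: field_simps abs_le_iff)
  then have "\<lceil>?r u\<rceil> \<le> \<lceil>?r v\<rceil> + 1" "\<lceil>?r v\<rceil> \<le> \<lceil>?r u\<rceil> + 1"
    by (metis ceiling_add_one ceiling_mono)+
  then show ?thesis unfolding layer_of_def by linarith
qed

lemma block_subset: "is_block V E x0 lam k B \<Longrightarrow> B \<subseteq> V"
  unfolding is_block_def by (meson layer_subset order_trans)

lemma mem_block_of: "v \<in> block_of v"
  unfolding block_of_def k_component_def by simp

lemma block_eq_block_of:
  assumes "is_block V E x0 lam k B" "v \<in> B"
  shows "B = block_of v"
proof -
  obtain N where N: "B \<subseteq> layer V E x0 lam N" "k_connected V E k B"
    and maximal: "\<forall>C. B \<subseteq> C \<and> C \<subseteq> layer V E x0 lam N \<and> k_connected V E k C \<longrightarrow> C = B"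
    using assms(1) unfolding is_block_def by auto
  have "layer_of v = N" using N(1) assms(2) mem_layer_iff by blast
  then have "block_of v = k_component V E k (layer V E x0 lam N) v" unfolding block_of_def by simp
  moreover have "B \<subseteq> k_component V E k (layer V E x0 lam N) v"
    using k_connected_subset_k_component[OF N(2,1) assms(2)] .
  moreover have "k_component V E k (layer V E x0 lam N) v \<subseteq> layer V E x0 lam N"
    using N(1) assms(2) by (intro k_component_subset) blast
  moreover have "k_connected V E k (k_component V E k (layer V E x0 lam N) v)"
    by (rule k_connected_k_component[OF layer_subset])
  ultimately show ?thesis using maximal by auto
qed

lemma is_block_block_of:
  assumes "v \<in> V"
  shows "is_block V E x0 lam k (block_of v)"
proof -
  let ?L = "layer V E x0 lam (layer_of v)"
  have "v \<in> ?L" using assms by (simp add: mem_layer_iff)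
  then have "block_of v \<subseteq> ?L" unfolding block_of_def by (rule k_component_subset)
  moreover have "k_connected V E k (block_of v)"
    unfolding block_of_def by (rule k_connected_k_component[OF layer_subset])
  moreover have "\<forall>C. block_of v \<subseteq> C \<and> C \<subseteq> ?L \<and> k_connected V E k C \<longrightarrow> C = block_of v"
  proof (intro allI impI, elim conjE)
    fix C assume C: "block_of v \<subseteq> C" "C \<subseteq> ?L" "k_connected V E k C"
    have "C \<subseteq> block_of v"
      unfolding block_of_def
      using k_connected_subset_k_component[OF C(3,2) subsetD[OF C(1) mem_block_of]] .
    with C(1) show "C = block_of v" by blast
  qed
  moreover have "block_of v \<noteq> {}" using mem_block_of by blast
  ultimately show ?thesis unfolding is_block_def by blast
qed

lemma skel_map_eq_block_of:
  assumes "v \<in> V"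
  shows "skel_map V E x0 lam k v = block_of v"
  unfolding skel_map_def
proof (rule the_equality)
  show "is_block V E x0 lam k (block_of v) \<and> v \<in> block_of v"
    using is_block_block_of[OF assms] mem_block_of by blast
  show "B = block_of v" if "is_block V E x0 lam k B \<and> v \<in> B" for B
    using that block_eq_block_of by blast
qed

lemma skel_map_preimage:
  assumes "is_block V E x0 lam k X"
  shows "{v \<in> V. skel_map V E x0 lam k v = X} = X"
proof -
  have "skel_map V E x0 lam k v = X \<longleftrightarrow> v \<in> X" if "v \<in> V" for v
    unfolding skel_map_eq_block_of[OF that] using block_eq_block_of[OF assms] mem_block_of by metis
  then show ?thesis using block_subset[OF assms] by blast
qed

lemma block_absorbs:
  assumes "is_block V E x0 lam k X" "a \<in> X" "w \<in> V" "layer_of w = layer_of a"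
    and "real (gdist V E a w) \<le> k"
  shows "w \<in> X"
proof -
  have "a \<in> V" using assms(1,2) block_subset by blast
  then have "k_step V E k (layer V E x0 lam (layer_of a)) a w"
    using assms(3-5) unfolding k_step_def by (simp add: mem_layer_iff)
  then have "w \<in> block_of a" unfolding block_of_def k_component_def by simp
  then show ?thesis using block_eq_block_of[OF assms(1,2)] by simp
qed

lemma skel_edge_if_close:
  assumes X: "is_block V E x0 lam k X" and Y: "is_block V E x0 lam k Y" and "X \<noteq> Y"
    and "a \<in> X" "b \<in> Y" and close: "real (gdist V E a b) \<le> lam" "real (gdist V E a b) \<le> k"
  shows "skel_edge E X Y"
proof -
  have "a \<in> V" "b \<in> V" using assms(4,5) X Y block_subset by blast+
  define n where "n = gdist V E a b"
  obtain f where f: "f 0 = a" "f n = b" and path: "\<forall>i<n. E (f i) (f (Suc i))"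
    using relpowp_gdist[OF \<open>a \<in> V\<close> \<open>b \<in> V\<close>] unfolding n_def relpowp_fun_conv by blast
  have "b \<notin> X"
    using block_eq_block_of[OF X] block_eq_block_of[OF Y \<open>b \<in> Y\<close>] \<open>X \<noteq> Y\<close> by blast
  then have layers_differ: "layer_of a \<noteq> layer_of b"
    using block_absorbs[OF X \<open>a \<in> X\<close> \<open>b \<in> V\<close>] close(2) by metis
  have on_path: "f i \<in> X \<union> Y" if "i \<le> n" for i
  proof -
    have w: "f i \<in> V" using path_in_V[OF path] f(1) \<open>a \<in> V\<close> that by simp
    have "gdist V E a (f i) \<le> n" "gdist V E (f i) b \<le> n"
      using gdist_along_path[OF path, of 0 i] gdist_along_path[OF path, of i n] f \<open>a \<in> V\<close> that
      by auto
    then have near_a: "real (gdist V E a (f i)) \<le> lam" "real (gdist V E a (f i)) \<le> k"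
      and near_b: "real (gdist V E b (f i)) \<le> lam" "real (gdist V E b (f i)) \<le> k"
      using close gdist_commute[OF w \<open>b \<in> V\<close>] unfolding n_def by linarith+
    have "\<bar>layer_of a - layer_of (f i)\<bar> \<le> 1" "\<bar>layer_of b - layer_of (f i)\<bar> \<le> 1"
      using layer_of_close near_a(1) near_b(1) \<open>a \<in> V\<close> \<open>b \<in> V\<close> w by auto
    moreover have "\<bar>layer_of a - layer_of b\<bar> \<le> 1"
      using layer_of_close close(1) \<open>a \<in> V\<close> \<open>b \<in> V\<close> unfolding n_def by auto
    ultimately have "layer_of (f i) = layer_of a \<or> layer_of (f i) = layer_of b"
      using layers_differ by linarith
    then show ?thesis
      using block_absorbs[OF X \<open>a \<in> X\<close> w] block_absorbs[OF Y \<open>b \<in> Y\<close> w] near_a(2) near_b(2)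
      by blast
  qed
  obtain i where "i < n" "f i \<in> X" "f (Suc i) \<notin> X"
    using ex_boundary_step[of "\<lambda>w. w \<in> X" f n] f \<open>a \<in> X\<close> \<open>b \<notin> X\<close> by auto
  moreover have "f (Suc i) \<in> Y" using on_path[of "Suc i"] \<open>i < n\<close> calculation(3) by auto
  ultimately show ?thesis using path unfolding skel_edge_def by blast
qed

end

theorem lemma4:
  fixes V :: "'a set" and E :: "'a \<Rightarrow> 'a \<Rightarrow> bool" and x0 :: 'a
    and lam k :: real and X Y :: "'a set"
  assumes "graph V E" and "connected_graph V E" and "x0 \<in> V"
    and "lam \<ge> 1" and "k \<ge> 1"
    and "X \<in> skel_vertices V E x0 lam k" and "Y \<in> skel_vertices V E x0 lam k"
    and "X \<noteq> Y" and "\<not> skel_edge E X Y"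
  shows "M_disjoint V E (min lam k)
           {v\<in>V. skel_map V E x0 lam k v = X} {v\<in>V. skel_map V E x0 lam k v = Y}"
proof -
  interpret skeleton V E x0 lam k
    using assms(1-4) by unfold_locales auto
  have X: "is_block V E x0 lam k X" and Y: "is_block V E x0 lam k Y"
    using assms(6,7) unfolding skel_vertices_def by auto
  show ?thesis
    unfolding M_disjoint_def skel_map_preimage[OF X] skel_map_preimage[OF Y]
  proof (intro ballI)
    fix a b assume "a \<in> X" "b \<in> Y"
    then have "\<not> (real (gdist V E a b) \<le> lam \<and> real (gdist V E a b) \<le> k)"
      using skel_edge_if_close[OF X Y assms(8)] assms(9) by blast
    then show "real (gdist V E a b) > min lam k" by linarith
  qed
qed

end
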